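(* Assume $(q+1)/d=3$, let $r$ be an integer, $a,b\in\mathbb F_{q^2}^*$, $0\le j_1,j_2<d$, and put $h(X)=1+aX^{1+3j_1}+bX^{2+3j_2}$ and $L_k(X)=1+a\epsilon^{j_1k}X+b\epsilon^{j_2k}X^2$ for $0\le k<d$. Suppose that for every $0\le k<d$ there exist $\tau_k\in\{0,1,2\}$ and $\lambda_k\in\mu_{q+1}$ with $L_k\in\mathcal L_k(2,\tau_k;\lambda_k)$, and that $\gcd(e_k,3)=1$ where $e_k=r-2+\tau_k$. Define $\pi(k)\in\mathbb Z/d\mathbb Z$ by $\lambda_k^3=\epsilon^{\pi(k)}$, and $K_1=\{k:\tau_k=2\}$, $K_2=\{k:\tau_k=1\}$. If $K_1\neq\emptyset$ and $K_2\ne\emptyset$, then $r\equiv-1\pmod3$, $d$ is even, $K_1$ and $K_2$ are the two cosets of $2\mathbb Z/d\mathbb Z$ in $\mathbb Z/d\mathbb Z$, $b^3=-1$, $a=\pm b^{-1}$, $j_1+j_2+1\equiv d/2\pmod d$, $2j_2-j_1+1\equiv d/2\pmod d$, and $\pi(k)+e_kk=rk$ in $\mathbb Z/d\mathbb Z$ for all $k$. Moreover, either $q\equiv5\pmod{18}$ and $h(X)=1+aX^{(q+1)/6}+bX^{(q+1)/3}$, or $q\equiv11\pmod{18}$ and $h(X)=1+aX^{5(q+1)/6}+bX^{2(q+1)/3}$.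
   Context: $q$ is a prime power, $d$ is a positive divisor of $q+1$, and $\epsilon\in\mathbb F_{q^2}^*$ has multiplicative order $d$. $\mu_{q+1}$ is the subgroup of order $q+1$ of $\mathbb F_{q^2}^*$. For $a\in\mathbb F_{q^2}$, $\bar a=a^q$; for $f(X)=\sum_{i=0}^n a_iX^i\in\mathbb F_{q^2}[X]$ with $a_n\neq0$, $\tilde f(X)=\sum_{i=0}^n\bar a_iX^{n-i}$. For $0\le k<d$, $0\le t<(q+1)/d$ and $\lambda\in\mu_{q+1}$: $\mathcal L_k(t,0;\lambda)$ is the set of $L\in\mathbb F_{q^2}[X]$ with $\deg L=t$, $\tilde L=\lambda L$ and $\gcd(L,X^{(q+1)/d}-\epsilon^k)=1$; for an integer $\tau$ with $(q+1)/d-t\le\tau\le t$, $\mathcal L_k(t,\tau;\lambda)$ is the set of $L=P+X^{(q+1)/d-\tau}Q$ with $P,Q\in\mathbb F_{q^2}[X]$, $\deg P=t-\tau$, $\tilde P=\lambda P$, $\deg Q=\tau+t-(q+1)/d$, $\tilde Q=\lambda\epsilon^kQ$, and $\gcd(L,X^{(q+1)/d}-\epsilon^k)=1$. *)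

theory Defs
  imports "HOL-Computational_Algebra.Polynomial" "HOL-Number_Theory.Cong"
begin

text \<open>Ambient field: a finite field 'a with card UNIV = q^2, so 'a is F_{q^2}.
  Conjugation is a |-> a^q.\<close>

definition prime_power :: "nat \<Rightarrow> bool" where
  "prime_power q \<longleftrightarrow> (\<exists>p n. prime p \<and> n > 0 \<and> q = p ^ n)"

definition conjq :: "nat \<Rightarrow> 'a::field \<Rightarrow> 'a" where
  "conjq q a = a ^ q"

definition tildep :: "nat \<Rightarrow> 'a::field poly \<Rightarrow> 'a poly" where
  "tildep q f = (\<Sum>i\<le>degree f. monom (conjq q (coeff f i)) (degree f - i))"

definition mu :: "nat \<Rightarrow> 'a::field set" where
  "mu m = {x. x ^ m = 1}"

definition has_mult_order :: "'a::field \<Rightarrow> nat \<Rightarrow> bool" where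
  "has_mult_order e d \<longleftrightarrow> e \<noteq> 0 \<and> d > 0 \<and> e ^ d = 1 \<and> (\<forall>m. 0 < m \<and> m < d \<longrightarrow> e ^ m \<noteq> 1)"

definition Lset :: "nat \<Rightarrow> nat \<Rightarrow> 'a::field \<Rightarrow> nat \<Rightarrow> nat \<Rightarrow> nat \<Rightarrow> 'a \<Rightarrow> 'a poly set" where
  "Lset q d eps k t tau lam =
    (let n = (q + 1) div d in
     if tau = 0 then
       {L. degree L = t \<and> tildep q L = smult lam L \<and> coprime L (monom 1 n - [:eps ^ k:])}
     else if n \<le> tau + t \<and> tau \<le> t then
       {L. (\<exists>P Q. L = P + monom 1 (n - tau) * Q \<and>
               degree P = t - tau \<and> tildep q P = smult lam P \<and>
               degree Q = tau + t - n \<and> tildep q Q = smult (lam * eps ^ k) Q) \<and>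
           coprime L (monom 1 n - [:eps ^ k:])}
     else {})"

end

theory Submission
  imports Defs
begin

(* Write A_k = a eps^(j1 k), B_k = b eps^(j2 k). For tau_k = 2 resp. 1 the self-reciprocity
   conditions defining L_k(2, tau_k; lam_k) become b^q = a zeta2^k resp. b^q = a^q b zeta1^k
   (together with a^q = 1/a), where zeta2 = eps^(j1+j2+1) and zeta1 = eps^(2 j2-j1+1).
   Neither zeta can be 1: otherwise A_k^3 eps^k = A_k B_k eps^k = 1 for a suitable k, and then
   L_k divides X^3 - eps^k, against coprimality. Since zeta_(tau_k)^k depends only on tau_k,
   consecutive indices (cyclically mod d) have different tau, so d is even, K1 and K2 are the
   parity classes, and zeta1 = zeta2 = -1. All remaining claims follow from these two signs;
   with q + 1 = 3d, the congruences for j1, j2 leave exactly the two shapes of h. *)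

lemma power_mod_order:
  fixes z :: "'a::monoid_mult"
  assumes "z ^ d = 1"
  shows "z ^ n = z ^ (n mod d)"
proof -
  have "z ^ n = z ^ (d * (n div d) + n mod d)" by simp
  also have "\<dots> = (z ^ d) ^ (n div d) * z ^ (n mod d)" by (simp only: power_add power_mult)
  finally have "z ^ n = (z ^ d) ^ (n div d) * z ^ (n mod d)" .
  with assms show ?thesis by simp
qed

lemma has_mult_order_power_inj:
  assumes "has_mult_order e d" "i < d" "j < d" "e ^ i = e ^ j"
  shows "i = j"
proof -
  have e: "e \<noteq> 0" "\<forall>m. 0 < m \<and> m < d \<longrightarrow> e ^ m \<noteq> 1"
    using assms(1) unfolding has_mult_order_def by auto
  have le: "i = j" if "i \<le> j" "j < d" "e ^ i = e ^ j" for i j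
  proof -
    have "e ^ i * e ^ (j - i) = e ^ j"
      using that(1) by (simp flip: power_add)
    hence "e ^ i * e ^ (j - i) = e ^ i * 1" using that(3) by simp
    hence "e ^ (j - i) = 1" using e(1) by simp
    hence "\<not> 0 < j - i" using e(2) that(2) by auto
    thus ?thesis using that(1) by simp
  qed
  show ?thesis
  proof (cases "i \<le> j")
    case True thus ?thesis using le assms(3,4) by blast
  next
    case False thus ?thesis using le[of j i] assms(2,4) by simp
  qed
qed

lemma has_mult_order_power_eq_iff:
  assumes "has_mult_order e d"
  shows "e ^ m = e ^ n \<longleftrightarrow> [m = n] (mod d)"
proof -
  have d: "0 < d" "e ^ d = 1" using assms unfolding has_mult_order_def by auto
  have "e ^ m = e ^ n \<longleftrightarrow> e ^ (m mod d) = e ^ (n mod d)"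
    by (simp only: power_mod_order[OF d(2), of m] power_mod_order[OF d(2), of n])
  also have "\<dots> \<longleftrightarrow> m mod d = n mod d"
    using has_mult_order_power_inj[OF assms, of "m mod d" "n mod d"] d(1) by auto
  finally show ?thesis unfolding cong_def .
qed

lemma has_mult_order_power_half:
  fixes e :: "'a::field"
  assumes "has_mult_order e d" "even d"
  shows "e ^ (d div 2) = -1"
proof -
  have "0 < d div 2" "d div 2 < d"
    using assms unfolding has_mult_order_def by auto
  hence "e ^ (d div 2) \<noteq> 1"
    using assms(1) unfolding has_mult_order_def by blast
  moreover have "(e ^ (d div 2)) ^ 2 = 1"
    using assms unfolding has_mult_order_def by (simp flip: power_mult)
  ultimately show ?thesis using power2_eq_1_iff by blast
qed

lemma has_mult_order_power_q:
  fixes e :: "'a::field"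
  assumes "has_mult_order e d" "d dvd q + 1"
  shows "e ^ q = inverse e"
proof -
  obtain m where "q + 1 = d * m" using assms(2) by blast
  hence "e ^ (q + 1) = (e ^ d) ^ m" by (simp add: power_mult)
  hence "e * e ^ q = 1" using assms(1) unfolding has_mult_order_def by simp
  moreover have "e \<noteq> 0" using assms(1) unfolding has_mult_order_def by simp
  ultimately show ?thesis by (simp add: inverse_unique)
qed

lemma Lset_coprime:
  "L \<in> Lset q d eps k t tau lam \<Longrightarrow> coprime L (monom 1 ((q + 1) div d) - [:eps ^ k:])"
  unfolding Lset_def Let_def by (auto split: if_splits)

lemma tildep_degree_0: "degree P = 0 \<Longrightarrow> tildep q P = [:conjq q (coeff P 0):]"
  unfolding tildep_def by (simp add: monom_0)

lemma tildep_degree_1: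
  "degree P = 1 \<Longrightarrow> tildep q P = [:conjq q (coeff P 1), conjq q (coeff P 0):]"
  unfolding tildep_def by (simp add: monom_0 monom_Suc)

lemma Lset_quadratic_tau2:
  fixes A B lam eps :: "'a::field"
  assumes "(q + 1) div d = 3" "[:1, A, B:] \<in> Lset q d eps k 2 2 lam"
  shows "lam = 1" "B ^ q = eps ^ k * A" "A ^ q = eps ^ k * B"
proof -
  from assms obtain P Q where L: "[:1, A, B:] = P + monom 1 1 * Q"
    and P: "degree P = 0" "tildep q P = smult lam P"
    and Q: "degree Q = 1" "tildep q Q = smult (lam * eps ^ k) Q"
    unfolding Lset_def Let_def by auto
  have "coeff [:1, A, B:] i = coeff P i + coeff (monom 1 1 * Q) i" for i
    using L by simp
  from this[of 0] this[of 1] this[of 2] P(1)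
  have coeffs: "coeff P 0 = 1" "coeff Q 0 = A" "coeff Q 1 = B"
    by (simp_all add: coeff_monom_mult coeff_eq_0 numeral_2_eq_2)
  from P(2) have "coeff (tildep q P) 0 = coeff (smult lam P) 0" by simp
  thus "lam = 1" using coeffs by (simp add: tildep_degree_0[OF P(1)] conjq_def)
  with Q(2) have "coeff (tildep q Q) i = coeff (smult (eps ^ k) Q) i" for i by simp
  from this[of 0] this[of 1] show "B ^ q = eps ^ k * A" "A ^ q = eps ^ k * B"
    using coeffs by (simp_all add: tildep_degree_1[OF Q(1)] conjq_def)
qed

lemma Lset_quadratic_tau1:
  fixes A B lam eps :: "'a::field"
  assumes "(q + 1) div d = 3" "[:1, A, B:] \<in> Lset q d eps k 2 1 lam"
  shows "A ^ q = lam" "lam * A = 1" "B ^ q = lam * eps ^ k * B"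
proof -
  from assms obtain P Q where L: "[:1, A, B:] = P + monom 1 2 * Q"
    and P: "degree P = 1" "tildep q P = smult lam P"
    and Q: "degree Q = 0" "tildep q Q = smult (lam * eps ^ k) Q"
    unfolding Lset_def Let_def by auto
  have "coeff [:1, A, B:] i = coeff P i + coeff (monom 1 2 * Q) i" for i
    using L by simp
  from this[of 0] this[of 1] this[of 2] P(1)
  have coeffs: "coeff P 0 = 1" "coeff P 1 = A" "coeff Q 0 = B"
    by (simp_all add: coeff_monom_mult coeff_eq_0 numeral_2_eq_2)
  from P(2) have "coeff (tildep q P) i = coeff (smult lam P) i" for i by simp
  from this[of 0] this[of 1] show "A ^ q = lam" "lam * A = 1"
    using coeffs by (simp_all add: tildep_degree_1[OF P(1)] conjq_def)
  from Q(2) have "coeff (tildep q Q) 0 = coeff (smult (lam * eps ^ k) Q) 0" by simp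
  thus "B ^ q = lam * eps ^ k * B"
    using coeffs by (simp add: tildep_degree_0[OF Q(1)] conjq_def)
qed

lemma not_coprime_quadratic_cube_minus:
  fixes A B c :: "'a::field"
  assumes "A ^ 3 * c = 1" "A * B * c = 1"
  shows "\<not> coprime [:1, A, B:] (monom 1 3 - [:c:])"
proof
  assume coprime: "coprime [:1, A, B:] (monom 1 3 - [:c:])"
  have "A \<noteq> 0" "c \<noteq> 0" using assms(1) by auto
  moreover have "A * c * B = A * c * A ^ 2"
    using assms by (simp add: power2_eq_square power3_eq_cube algebra_simps)
  ultimately have B: "B = A ^ 2" "B \<noteq> 0" by auto
  have "monom 1 3 - [:c:] = [:1, A, B:] * [:-c, c * A:]"
    using B(1) assms(2) by (simp add: monom_altdef power3_eq_cube power2_eq_square algebra_simps)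
  hence "is_unit [:1, A, B:]"
    using coprime_common_divisor[OF coprime dvd_refl] by (metis dvd_triv_left)
  with B(2) show False by (simp add: is_unit_iff_degree)
qed

lemma two_valued_alternating_parity:
  assumes "tau ` {..<d} \<subseteq> {u, v}" "\<And>k. Suc k < d \<Longrightarrow> tau (Suc k) \<noteq> tau k" "k < d"
  shows "tau k = tau 0 \<longleftrightarrow> even k"
  using assms(3)
proof (induction k)
  case (Suc k)
  have "tau k \<in> {u, v}" "tau (Suc k) \<in> {u, v}" "tau 0 \<in> {u, v}"
    using assms(1) Suc.prems by (simp_all add: image_subset_iff)
  moreover have "tau (Suc k) \<noteq> tau k" using assms(2) Suc.prems .
  ultimately have "tau (Suc k) = tau 0 \<longleftrightarrow> tau k \<noteq> tau 0" by (metis empty_iff insertE)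
  with Suc show ?case by simp
qed simp

lemma two_valued_root_of_unity_pattern:
  fixes tau :: "nat \<Rightarrow> 'b" and z :: "'b \<Rightarrow> 'a::idom"
  assumes two_valued: "tau ` {..<d} \<subseteq> {u, v}"
    and root: "\<And>k. k < d \<Longrightarrow> z (tau k) ^ d = 1"
    and nontrivial: "\<And>k. k < d \<Longrightarrow> z (tau k) \<noteq> 1"
    and same: "\<And>k k'. k < d \<Longrightarrow> k' < d \<Longrightarrow> tau k = tau k' \<Longrightarrow> z (tau k) ^ k = z (tau k) ^ k'"
  shows "even d" "\<And>k. k < d \<Longrightarrow> tau k = tau 0 \<longleftrightarrow> even k" "\<And>k. k < d \<Longrightarrow> z (tau k) = -1"
proof -
  have nonzero: "z (tau k) \<noteq> 0" if "k < d" for k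
    using root[OF that] that by (auto simp: power_0_left)
  have alternating: "tau (Suc k) \<noteq> tau k" if "Suc k < d" for k
  proof
    assume "tau (Suc k) = tau k"
    with same[of "Suc k" k] that have "z (tau k) ^ Suc k = z (tau k) ^ k" by simp
    hence "z (tau k) ^ k * z (tau k) = z (tau k) ^ k * 1" by simp
    thus False using nonzero nontrivial that by simp
  qed
  show parity: "tau k = tau 0 \<longleftrightarrow> even k" if "k < d" for k
    by (rule two_valued_alternating_parity[OF two_valued alternating that])
  show even: "even d"
  proof (rule ccontr)
    assume "odd d"
    hence last: "d - 1 < d" "Suc (d - 1) = d" "even (d - 1)" by presburger+
    hence "tau (d - 1) = tau 0" using parity by blast
    have "z (tau 0) ^ (d - 1) * z (tau 0) = z (tau 0) ^ Suc (d - 1)"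
      by (rule power_Suc2[symmetric])
    also have "\<dots> = z (tau 0) ^ d" by (simp only: last(2))
    also have "\<dots> = z (tau 0) ^ 0 * 1"
      using root[of 0] last(1) by simp
    also have "z (tau 0) ^ 0 = z (tau 0) ^ (d - 1)"
      using same[of 0 "d - 1"] \<open>tau (d - 1) = tau 0\<close> last(1) by simp
    finally show False using nonzero nontrivial last(1) by simp
  qed
  show "z (tau k) = -1" if k: "k < d" for k
  proof -
    define k' where "k' = (k + 2) mod d"
    have "k' < d" using k unfolding k'_def by simp
    have "k + 2 = d * ((k + 2) div d) + k'" unfolding k'_def by simp
    hence "even (k + 2) = even (d * ((k + 2) div d) + k')" by (rule arg_cong)
    hence "even k' \<longleftrightarrow> even k" using even by simp
    moreover have "tau k \<in> {u, v}" "tau k' \<in> {u, v}" "tau 0 \<in> {u, v}"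
      using two_valued k \<open>k' < d\<close> by (simp_all add: image_subset_iff)
    ultimately have "tau k = tau k'"
      using parity[OF k] parity[OF \<open>k' < d\<close>] by (metis empty_iff insertE)
    hence "z (tau k) ^ k = z (tau k) ^ k'" by (rule same[OF k \<open>k' < d\<close>])
    also have "\<dots> = z (tau k) ^ k * z (tau k) ^ 2"
      unfolding k'_def by (simp flip: power_mod_order[OF root[OF k]] power_add)
    finally have "z (tau k) ^ 2 = 1" using nonzero[OF k] by simp
    thus ?thesis using nontrivial[OF k] power2_eq_1_iff by blast
  qed
qed

lemma coprime_3_shifts:
  fixes r :: int and tau :: "nat \<Rightarrow> nat"
  assumes "\<And>k. k < d \<Longrightarrow> tau k \<le> 2 \<and> coprime (r - 2 + int (tau k)) 3"
    and "\<exists>k<d. tau k = 2" "\<exists>k<d. tau k = 1"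
  shows "[r = -1] (mod 3)" "\<And>k. k < d \<Longrightarrow> tau k = 1 \<or> tau k = 2"
proof -
  have not_dvd: "\<not> 3 dvd r - 2 + int (tau k)" if "k < d" for k
    using assms(1)[OF that] coprime_absorb_right[of 3 "r - 2 + int (tau k)"] by auto
  from assms(2,3) obtain k1 k2 where "k1 < d" "tau k1 = 2" "k2 < d" "tau k2 = 1" by blast
  with not_dvd[of k1] not_dvd[of k2] show r: "[r = -1] (mod 3)"
    unfolding cong_iff_dvd_diff by simp presburger
  show "tau k = 1 \<or> tau k = 2" if "k < d" for k
    using assms(1)[OF that] not_dvd[OF that] r unfolding cong_iff_dvd_diff by auto presburger
qed

lemma exponents_mod_18:
  fixes q d j1 j2 :: nat
  assumes "q + 1 = 3 * d" "even d" "j1 < d" "j2 < d"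
    and cong1: "[j1 + j2 + 1 = d div 2] (mod d)"
    and cong2: "[2 * int j2 - int j1 + 1 = int d div 2] (mod int d)"
  shows "(q mod 18 = 5 \<and> 1 + 3 * j1 = (q + 1) div 6 \<and> 2 + 3 * j2 = (q + 1) div 3) \<or>
         (q mod 18 = 11 \<and> 1 + 3 * j1 = 5 * (q + 1) div 6 \<and> 2 + 3 * j2 = 2 * (q + 1) div 3)"
proof -
  obtain e where e: "d = 2 * e" using assms(2) by blast
  have s: "int d dvd (int j1 + int j2 + 1) - int e"
    using cong1 unfolding e cong_int_iff[symmetric] cong_iff_dvd_diff by (simp add: ac_simps)
  have t: "int d dvd (2 * int j2 - int j1 + 1) - int e"
    using cong2 unfolding e cong_iff_dvd_diff by simp
  have "int d dvd int (1 + 3 * j1) - int e"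
    using dvd_diff[OF dvd_mult[OF s, of 2] t] by (simp add: algebra_simps)
  hence "[1 + 3 * j1 = e] (mod d)" unfolding cong_int_iff[symmetric] cong_iff_dvd_diff .
  hence "(1 + 3 * j1) mod d = e" using e assms(3) unfolding cong_def by simp
  hence x1: "1 + 3 * j1 = d * ((1 + 3 * j1) div d) + e" by (metis mult_div_mod_eq)
  have "int d dvd int (2 + 3 * j2) - int d"
    using dvd_add[OF s t] e by (simp add: algebra_simps)
  hence "[2 + 3 * j2 = d] (mod d)" unfolding cong_int_iff[symmetric] cong_iff_dvd_diff .
  hence "(2 + 3 * j2) mod d = 0" unfolding cong_def by simp
  hence x2: "2 + 3 * j2 = d * ((2 + 3 * j2) div d)" by (metis add_0_right mult_div_mod_eq)
  have "(1 + 3 * j1) div d < 3" "(2 + 3 * j2) div d < 3"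
    using assms(3,4) by (simp_all add: div_less_iff_less_mult)
  hence "(1 + 3 * j1) div d \<in> {0, 1, 2}" "(2 + 3 * j2) div d \<in> {0, 1, 2}" by auto
  hence "1 + 3 * j1 \<in> {e, 3 * e, 5 * e}" "2 + 3 * j2 \<in> {0, 2 * e, 4 * e}"
    using x1 x2 unfolding e by auto
  moreover have "1 + 3 * j1 \<noteq> 3 * e" by presburger
  ultimately have A: "1 + 3 * j1 = e \<or> 1 + 3 * j1 = 5 * e"
    and B: "2 + 3 * j2 = 2 * e \<or> 2 + 3 * j2 = 4 * e" by auto
  have q: "q + 1 = 6 * e" using assms(1) e by simp
  from A show ?thesis
  proof
    assume a: "1 + 3 * j1 = e"
    hence "2 + 3 * j2 \<noteq> 4 * e" by presburger
    with B have b: "2 + 3 * j2 = 2 * e" by simp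
    from a q have "q = 18 * j1 + 5" by linarith
    hence "q mod 18 = 5" by simp
    with a b q show ?thesis by simp
  next
    assume a: "1 + 3 * j1 = 5 * e"
    hence "2 + 3 * j2 \<noteq> 2 * e" by presburger
    with B have b: "2 + 3 * j2 = 4 * e" by simp
    from a b q have "q + 18 * j2 + 7 = 18 * j1" by linarith
    hence "q mod 18 = 11" by presburger
    with a b q show ?thesis by simp
  qed
qed

locale mixed_quadratic_family =
  fixes q d :: nat and eps a b :: "'a::field" and j1 j2 :: nat
    and tau :: "nat \<Rightarrow> nat" and lam :: "nat \<Rightarrow> 'a"
  assumes order: "has_mult_order eps d" and dvd: "d dvd q + 1" and index: "(q + 1) div d = 3"
    and nonzero: "a \<noteq> 0" "b \<noteq> 0"
    and tau_values: "\<And>k. k < d \<Longrightarrow> tau k = 1 \<or> tau k = 2"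
    and member: "\<And>k. k < d \<Longrightarrow>
      [:1, a * eps ^ (j1 * k), b * eps ^ (j2 * k):] \<in> Lset q d eps k 2 (tau k) (lam k)"
    and tau2_exists: "\<exists>k<d. tau k = 2" and tau1_exists: "\<exists>k<d. tau k = 1"
begin

(* zeta 2 = eps^(j1+j2+1) and zeta 1 = eps^(2 j2-j1+1); the latter is written as a quotient
   since 2 j2 - j1 + 1 may be negative. *)
definition zeta :: "nat \<Rightarrow> 'a" where
  "zeta i = (if i = 2 then eps ^ (1 + j1 + j2) else eps ^ (1 + 2 * j2) / eps ^ j1)"

lemma eps_nonzero: "eps \<noteq> 0"
  using order unfolding has_mult_order_def by simp

lemma power_q_twist: "(x * eps ^ n) ^ q = x ^ q / eps ^ n"
proof -
  have "(eps ^ n) ^ q = (eps ^ q) ^ n" by (metis power_mult mult.commute)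
  thus ?thesis
    by (simp add: power_mult_distrib has_mult_order_power_q[OF order dvd] power_inverse divide_inverse)
qed

lemma tau2_relations:
  assumes "k < d" "tau k = 2"
  shows "lam k = 1" "b ^ q = a * zeta 2 ^ k" "a ^ q = b * zeta 2 ^ k"
proof -
  note L = Lset_quadratic_tau2[OF index member[OF assms(1), unfolded assms(2)]]
  show "lam k = 1" by (rule L(1))
  have twist: "zeta 2 ^ k = eps ^ k * eps ^ (j1 * k) * eps ^ (j2 * k)"
    unfolding zeta_def by (simp add: algebra_simps power_add flip: power_mult)
  show "b ^ q = a * zeta 2 ^ k" "a ^ q = b * zeta 2 ^ k"
    using L(2,3) eps_nonzero unfolding twist power_q_twist by (simp_all add: field_simps)
qed

lemma tau1_relations:
  assumes "k < d" "tau k = 1"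
  shows "lam k * (a * eps ^ (j1 * k)) = 1" "a ^ q * a = 1" "b ^ q = a ^ q * b * zeta 1 ^ k"
proof -
  note L = Lset_quadratic_tau1[OF index member[OF assms(1), unfolded assms(2)]]
  show "lam k * (a * eps ^ (j1 * k)) = 1" by (rule L(2))
  then show "a ^ q * a = 1"
    using L(1) eps_nonzero unfolding power_q_twist by (simp add: field_simps)
  have "zeta 1 = eps ^ (1 + 2 * j2) / eps ^ j1" by (simp add: zeta_def)
  hence "zeta 1 ^ k = eps ^ ((1 + 2 * j2) * k) / eps ^ (j1 * k)"
    by (simp only: power_divide power_mult)
  also have "(1 + 2 * j2) * k = k + j2 * k + j2 * k" by simp
  finally have twist: "zeta 1 ^ k = eps ^ k * eps ^ (j2 * k) * eps ^ (j2 * k) / eps ^ (j1 * k)"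
    by (simp only: power_add)
  show "b ^ q = a ^ q * b * zeta 1 ^ k"
    using L(3) eps_nonzero unfolding twist power_q_twist L(1)[symmetric] by (simp add: field_simps)
qed

lemma a_power_q: "a ^ q = inverse a"
proof -
  obtain k where "k < d" "tau k = 1" using tau1_exists by blast
  hence "a * a ^ q = 1" using tau1_relations(2) by (simp add: mult.commute)
  thus ?thesis by (simp add: inverse_unique)
qed

lemma zeta_nonzero: "zeta i \<noteq> 0"
  using eps_nonzero unfolding zeta_def by simp

lemma ab_zeta2:
  assumes "k < d" "tau k = 2"
  shows "a * b * zeta 2 ^ k = 1"
  using tau2_relations(3)[OF assms] nonzero(1) by (simp add: a_power_q field_simps)

lemma a_cube_zeta:
  assumes "k' < d" "tau k' = 2" "k < d" "tau k = 1"
  shows "a ^ 3 * zeta 2 ^ (2 * k') = zeta 1 ^ k"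
proof -
  have "a * zeta 2 ^ k' = inverse a * b * zeta 1 ^ k"
    using tau2_relations(2)[OF assms(1,2)] tau1_relations(3)[OF assms(3,4)] by (simp add: a_power_q)
  moreover have "a * zeta 2 ^ k' * b = 1"
    using ab_zeta2[OF assms(1,2)] by (simp add: ac_simps)
  hence "b = inverse (a * zeta 2 ^ k')" by (rule inverse_unique[symmetric])
  ultimately show ?thesis
    using nonzero(1) zeta_nonzero[of 2] by (simp add: field_simps power_mult power3_eq_cube power2_eq_square)
qed

lemma zeta_relation: "eps ^ (3 * j1 + 1) * zeta 1 = zeta 2 ^ 2"
proof -
  have "eps ^ (3 * j1 + 1) * eps ^ (1 + 2 * j2) = (eps ^ (1 + j1 + j2)) ^ 2 * eps ^ j1"
    by (simp flip: power_add power_mult add: algebra_simps)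
  thus ?thesis using eps_nonzero unfolding zeta_def by (simp add: field_simps)
qed

lemma coprime_condition:
  assumes "k < d"
  shows "a ^ 3 * eps ^ ((3 * j1 + 1) * k) \<noteq> 1 \<or> a * b * zeta 2 ^ k \<noteq> 1"
proof -
  have "coprime [:1, a * eps ^ (j1 * k), b * eps ^ (j2 * k):] (monom 1 3 - [:eps ^ k:])"
    using Lset_coprime[OF member[OF assms]] index by simp
  moreover have "(a * eps ^ (j1 * k)) ^ 3 * eps ^ k = a ^ 3 * eps ^ ((3 * j1 + 1) * k)"
    by (simp add: power_mult_distrib algebra_simps flip: power_mult power_add)
  moreover have "a * eps ^ (j1 * k) * (b * eps ^ (j2 * k)) * eps ^ k = a * b * zeta 2 ^ k"
    unfolding zeta_def by (simp add: algebra_simps flip: power_mult power_add)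
  ultimately show ?thesis using not_coprime_quadratic_cube_minus by metis
qed

lemma zeta2_ne_1: "zeta 2 \<noteq> 1"
proof
  assume z2: "zeta 2 = 1"
  obtain k1 where k1: "k1 < d" "tau k1 = 2" using tau2_exists by blast
  obtain k2 where k2: "k2 < d" "tau k2 = 1" using tau1_exists by blast
  have "a ^ 3 = zeta 1 ^ k2" using a_cube_zeta[OF k1 k2] z2 by simp
  hence "a ^ 3 * eps ^ ((3 * j1 + 1) * k2) = zeta 1 ^ k2 * (eps ^ (3 * j1 + 1)) ^ k2"
    by (simp only: power_mult)
  also have "\<dots> = (eps ^ (3 * j1 + 1) * zeta 1) ^ k2"
    by (simp only: power_mult_distrib mult.commute[of "zeta 1 ^ k2"])
  also have "\<dots> = 1" using zeta_relation z2 by simp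
  finally show False
    using coprime_condition[OF k2(1)] ab_zeta2[OF k1] z2 by simp
qed

lemma zeta1_ne_1: "zeta 1 \<noteq> 1"
proof
  assume z1: "zeta 1 = 1"
  obtain k1 where k1: "k1 < d" "tau k1 = 2" using tau2_exists by blast
  obtain k2 where k2: "k2 < d" "tau k2 = 1" using tau1_exists by blast
  have "eps ^ (3 * j1 + 1) = zeta 2 ^ 2" using zeta_relation z1 by simp
  hence "a ^ 3 * eps ^ ((3 * j1 + 1) * k1) = a ^ 3 * zeta 2 ^ (2 * k1)"
    by (simp only: power_mult)
  also have "\<dots> = 1" using a_cube_zeta[OF k1 k2] z1 by simp
  finally show False
    using coprime_condition[OF k1(1)] ab_zeta2[OF k1] by simp
qed

lemma zeta_power_d: "zeta i ^ d = 1"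
proof -
  have "eps ^ d = 1" using order unfolding has_mult_order_def by simp
  hence pow: "(eps ^ n) ^ d = 1" for n by (simp flip: power_mult add: mult.commute[of n] power_mult)
  have "zeta i ^ d = (if i = 2 then (eps ^ (1 + j1 + j2)) ^ d else (eps ^ (1 + 2 * j2)) ^ d / (eps ^ j1) ^ d)"
    unfolding zeta_def by (simp only: if_distrib[of "\<lambda>x. x ^ d"] power_divide)
  thus ?thesis by (simp only: pow) simp
qed

lemma zeta_power_tau_eq:
  assumes "k < d" "k' < d" "tau k = tau k'"
  shows "zeta (tau k) ^ k = zeta (tau k) ^ k'"
  using tau_values[OF assms(1)]
proof
  assume "tau k = 1"
  with assms have "a ^ q * b * zeta 1 ^ k = a ^ q * b * zeta 1 ^ k'"
    using tau1_relations(3) by metis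
  thus ?thesis using \<open>tau k = 1\<close> nonzero by (simp add: a_power_q)
next
  assume "tau k = 2"
  with assms have "a * zeta 2 ^ k = a * zeta 2 ^ k'"
    using tau2_relations(2) by metis
  thus ?thesis using \<open>tau k = 2\<close> nonzero by simp
qed

lemma tau_pattern:
  "even d" "\<And>k. k < d \<Longrightarrow> tau k = tau 0 \<longleftrightarrow> even k" "\<And>k. k < d \<Longrightarrow> zeta (tau k) = -1"
proof -
  have "tau ` {..<d} \<subseteq> {1, 2}" using tau_values by auto
  moreover have "zeta (tau k) \<noteq> 1" if "k < d" for k
    using tau_values[OF that] zeta1_ne_1 zeta2_ne_1 by auto
  ultimately show "even d" "\<And>k. k < d \<Longrightarrow> tau k = tau 0 \<longleftrightarrow> even k"
    "\<And>k. k < d \<Longrightarrow> zeta (tau k) = -1"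
    using two_valued_root_of_unity_pattern[of tau d 1 2 zeta] zeta_power_d zeta_power_tau_eq by blast+
qed

lemma zeta_eq_minus_1: "zeta 1 = -1" "zeta 2 = -1"
  using tau_pattern(3) tau1_exists tau2_exists by metis+

lemma ab_sign:
  assumes "k < d" "tau k = 2"
  shows "a * b = (-1) ^ k"
proof -
  have "a * b * (-1) ^ k = 1" using ab_zeta2[OF assms] zeta_eq_minus_1(2) by simp
  hence "a * b * (-1) ^ k * (-1) ^ k = (-1) ^ k" by simp
  thus ?thesis by (simp only: mult.assoc minus_one_mult_self mult_1_right)
qed

lemma a_cube_sign:
  assumes "k < d" "tau k = 1"
  shows "a ^ 3 = (-1) ^ k"
proof -
  obtain k' where "k' < d" "tau k' = 2" using tau2_exists by blast
  from a_cube_zeta[OF this assms] show ?thesis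
    unfolding zeta_eq_minus_1 by (simp add: power_mult)
qed

lemma eps_power_3j1: "eps ^ (3 * j1 + 1) = -1"
  using zeta_relation unfolding zeta_eq_minus_1 by (simp add: minus_equation_iff)

lemma parity_differs:
  assumes "k < d" "tau k = 2" "k' < d" "tau k' = 1"
  shows "even k \<longleftrightarrow> odd k'"
proof -
  have "tau k = tau 0 \<longleftrightarrow> even k" "tau k' = tau 0 \<longleftrightarrow> even k'"
    using tau_pattern(2) assms(1,3) by blast+
  moreover have "tau 0 = 1 \<or> tau 0 = 2" using tau_values[of 0] assms(1) by simp
  ultimately show ?thesis using assms(2,4) by (cases "tau 0 = 2") simp_all
qed

lemma b_cube: "b ^ 3 = -1"
proof -
  obtain k1 where k1: "k1 < d" "tau k1 = 2" using tau2_exists by blast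
  obtain k2 where k2: "k2 < d" "tau k2 = 1" using tau1_exists by blast
  have "b ^ 3 = (-1) ^ k2 * ((-1) ^ k2 * b ^ 3)"
    by (simp add: mult.assoc[symmetric] minus_one_mult_self)
  also have "(-1) ^ k2 * b ^ 3 = ((-1) ^ k1) ^ 3"
    unfolding a_cube_sign[OF k2, symmetric] ab_sign[OF k1, symmetric] by (simp add: power_mult_distrib)
  finally show ?thesis using parity_differs[OF k1 k2] by (simp add: minus_one_power_iff split: if_splits)
qed

lemma a_eq_pm_inverse_b: "a = inverse b \<or> a = - inverse b"
proof -
  obtain k where "k < d" "tau k = 2" using tau2_exists by blast
  hence "a * b = 1 \<or> a * b = -1" using ab_sign by (simp add: minus_one_power_iff)
  thus ?thesis
  proof
    assume "a * b = 1"
    hence "b * a = 1" by (simp add: mult.commute)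
    thus ?thesis using inverse_unique by blast
  next
    assume "a * b = -1"
    moreover have "b * - a = - (a * b)" by (simp add: mult.commute)
    ultimately have "b * - a = 1" by simp
    thus ?thesis using inverse_unique by fastforce
  qed
qed

lemma lam_cube:
  assumes "k < d"
  shows "lam k ^ 3 = eps ^ (k * (2 - tau k))"
  using tau_values[OF assms]
proof
  assume tau: "tau k = 1"
  have "a ^ 3 * eps ^ (3 * j1 * k) * eps ^ k = a ^ 3 * (eps ^ (3 * j1 + 1)) ^ k"
    by (simp add: algebra_simps flip: power_add power_mult)
  also have "\<dots> = 1"
    unfolding a_cube_sign[OF assms tau] eps_power_3j1 by (rule minus_one_mult_self)
  finally have unit: "a ^ 3 * eps ^ (3 * j1 * k) * eps ^ k = 1" .
  have "(lam k * (a * eps ^ (j1 * k))) ^ 3 = 1" using tau1_relations(1)[OF assms tau] by simp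
  hence cube: "lam k ^ 3 * (a ^ 3 * eps ^ (3 * j1 * k)) = 1"
    by (simp add: power_mult_distrib ac_simps flip: power_mult)
  have "lam k ^ 3 = lam k ^ 3 * (a ^ 3 * eps ^ (3 * j1 * k) * eps ^ k)" using unit by simp
  also have "\<dots> = lam k ^ 3 * (a ^ 3 * eps ^ (3 * j1 * k)) * eps ^ k" by (simp only: mult.assoc)
  finally have "lam k ^ 3 = eps ^ k" unfolding cube by simp
  thus ?thesis using tau by simp
qed (simp add: tau2_relations(1)[OF assms])

lemma tau_classes:
  "{{k. k < d \<and> tau k = 2}, {k. k < d \<and> tau k = 1}} = {{k. k < d \<and> even k}, {k. k < d \<and> odd k}}"
proof -
  have d: "0 < d" using tau1_exists by auto
  have tau_iff: "tau k = i \<longleftrightarrow> (even k \<longleftrightarrow> tau 0 = i)" if "k < d" "i = 1 \<or> i = 2" for k i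
    using tau_values[OF that(1)] tau_values[OF d] tau_pattern(2)[OF that(1)] that(2)
    by (cases "tau 0 = 2"; cases "tau k = 2"; cases "i = 2") simp_all
  hence tau_class: "{k. k < d \<and> tau k = i} = {k. k < d \<and> (even k \<longleftrightarrow> tau 0 = i)}"
    if "i = 1 \<or> i = 2" for i
    using that by blast
  from tau_values[OF d] show ?thesis
    by (elim disjE) (simp_all add: tau_class insert_commute)
qed

lemma exponent_congruences:
  "[j1 + j2 + 1 = d div 2] (mod d)" "[2 * int j2 - int j1 + 1 = int d div 2] (mod int d)"
proof -
  have half: "eps ^ (d div 2) = -1"
    using has_mult_order_power_half[OF order tau_pattern(1)] .
  have "eps ^ (j1 + j2 + 1) = eps ^ (d div 2)"
    using zeta_eq_minus_1(2) unfolding half zeta_def by (simp add: ac_simps)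
  thus "[j1 + j2 + 1 = d div 2] (mod d)" using has_mult_order_power_eq_iff[OF order] by blast
  have "eps ^ (1 + 2 * j2) = eps ^ (d div 2 + j1)"
    using zeta_eq_minus_1(1) eps_nonzero unfolding power_add half zeta_def by (simp add: field_simps)
  hence "[int (1 + 2 * j2) = int (d div 2 + j1)] (mod int d)"
    using has_mult_order_power_eq_iff[OF order] cong_int_iff by blast
  thus "[2 * int j2 - int j1 + 1 = int d div 2] (mod int d)"
    unfolding cong_iff_dvd_diff by (simp add: zdiv_int algebra_simps)
qed

lemma lam_cube_exponent_cong:
  fixes r :: int
  assumes "k < d" "lam k ^ 3 = eps ^ p"
  shows "[int p + (r - 2 + int (tau k)) * int k = r * int k] (mod int d)"
proof -
  have "[p = k * (2 - tau k)] (mod d)"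
    using assms lam_cube has_mult_order_power_eq_iff[OF order] by metis
  hence "[int p = int k * (2 - int (tau k))] (mod int d)"
    using tau_values[OF assms(1)] by (auto simp flip: cong_int_iff)
  thus ?thesis unfolding cong_iff_dvd_diff by (simp add: algebra_simps)
qed

end

theorem lemma4p10:
  fixes q d :: nat and eps a b :: "'a::{field,finite}" and r :: int and j1 j2 :: nat
    and tau :: "nat \<Rightarrow> nat" and lam :: "nat \<Rightarrow> 'a" and pi :: "nat \<Rightarrow> nat"
  assumes q: "prime_power q" and card: "card (UNIV :: 'a set) = q ^ 2"
    and d: "d dvd q + 1" and eps: "has_mult_order eps d"
    and three: "(q + 1) div d = 3"
    and ab: "a \<noteq> 0" "b \<noteq> 0" and j: "j1 < d" "j2 < d"
    and Lk: "\<forall>k<d. tau k \<in> {0,1,2} \<and> lam k \<in> mu (q + 1) \<and>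
               [:1, a * eps ^ (j1 * k), b * eps ^ (j2 * k):] \<in> Lset q d eps k 2 (tau k) (lam k) \<and>
               coprime (r - 2 + int (tau k)) 3"
    and pidef: "\<forall>k<d. pi k < d \<and> lam k ^ 3 = eps ^ (pi k)"
    and K1: "{k. k < d \<and> tau k = 2} \<noteq> {}"
    and K2: "{k. k < d \<and> tau k = 1} \<noteq> {}"
  shows "[r = -1] (mod 3) \<and> even d \<and>
    {{k. k < d \<and> tau k = 2}, {k. k < d \<and> tau k = 1}} = {{k. k < d \<and> even k}, {k. k < d \<and> odd k}} \<and>
    b ^ 3 = -1 \<and> (a = inverse b \<or> a = - inverse b) \<and>
    [j1 + j2 + 1 = d div 2] (mod d) \<and>
    [2 * int j2 - int j1 + 1 = int d div 2] (mod int d) \<and>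
    (\<forall>k<d. [int (pi k) + (r - 2 + int (tau k)) * int k = r * int k] (mod int d)) \<and>
    ((q mod 18 = 5 \<and> 1 + monom a (1 + 3 * j1) + monom b (2 + 3 * j2)
        = 1 + monom a ((q + 1) div 6) + monom b ((q + 1) div 3)) \<or>
     (q mod 18 = 11 \<and> 1 + monom a (1 + 3 * j1) + monom b (2 + 3 * j2)
        = 1 + monom a (5 * (q + 1) div 6) + monom b (2 * (q + 1) div 3)))"
proof -
  have q3: "q + 1 = 3 * d" using d three by (metis dvd_mult_div_cancel mult.commute)
  have shifts: "tau k \<le> 2 \<and> coprime (r - 2 + int (tau k)) 3" if "k < d" for k
    using Lk that by auto
  have taus: "\<exists>k<d. tau k = 2" "\<exists>k<d. tau k = 1" using K1 K2 by auto
  note tau = coprime_3_shifts[OF shifts taus]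
  have member: "\<And>k. k < d \<Longrightarrow>
      [:1, a * eps ^ (j1 * k), b * eps ^ (j2 * k):] \<in> Lset q d eps k 2 (tau k) (lam k)"
    using Lk by blast
  interpret mixed_quadratic_family q d eps a b j1 j2 tau lam
    using eps d three ab tau(2) member taus by unfold_locales blast+
  have pi: "\<forall>k<d. [int (pi k) + (r - 2 + int (tau k)) * int k = r * int k] (mod int d)"
    using pidef lam_cube_exponent_cong by blast
  show ?thesis
    by (intro conjI tau(1) tau_pattern(1) tau_classes b_cube a_eq_pm_inverse_b exponent_congruences pi)
      (use exponents_mod_18[OF q3 tau_pattern(1) j exponent_congruences] in auto)
qed

end
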